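(* Let $X=\bigcup_{n\ge1}X_n$ be a positively graded set. The space $K[T_{\infty,X}]=\bigoplus_{n\ge1}K[T_{n,X}]$ of planar rooted trees with vertices coloured by $X$, with the operations $t\bullet_iw:=t\circ_iw$ (grafting), is a grafting algebra, and it is the free grafting algebra on $X$: for every grafting algebra $A$ and every map $\varphi:X\to A$ with $\varphi(X_n)\subseteq A_n$, there is a unique degree-preserving linear map $\Phi:K[T_{\infty,X}]\to A$ with $\Phi(t\circ_iw)=\Phi(t)\bullet_i\Phi(w)$ for all $t,w$ and $0\le i\le|w|$, and $\Phi(\mathfrak c_n,x)=\varphi(x)$ for $x\in X_n$. In particular the free grafting algebra on one generator of degree $1$ is spanned by planar binary rooted trees.
   Context: A preshuffle algebra is a graded vector space $A=\bigoplus_{n\ge0}A_n$ over a field $K$ with linear maps $\bullet_i:A_n\otimes A_m\to A_{n+m}$ for all $n,m\ge0$ and $0\le i\le m$, such that $(x\bullet_iy)\bullet_jz=x\bullet_{i+j}(y\bullet_jz)$ for all homogeneous $x,y,z$, $0\le i\le|y|$, $0\le j\le|z|$. A grafting algebra is a preshuffle algebra which moreover satisfies $x\bullet_i(y\bullet_jz)=y\bullet_{j+|x|}(x\bullet_iz)$ for all homogeneous $x,y,z$ and $0\le i<j\le|z|$. A planar rooted tree is a planar tree with a root, in which every internal vertex has at least two incoming edges and one outgoing edge; the leaves of a tree with $n+1$ leaves are numbered $0,\dots,n$ from left to right, and the tree has degree $n$ ($n\ge1$). $T_{n,X}$ is the set of planar rooted trees with $n+1$ leaves whose internal vertices are coloured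 by elements of $X$ so that a vertex with $k+1$ incoming edges is coloured by an element of $X_k$. For coloured trees $t,w$ and $0\le i\le|w|$, $t\circ_iw$ is the coloured tree obtained by attaching the root of $t$ to the $i$-th leaf of $w$; it has degree $|t|+|w|$. $(\mathfrak c_n,x)$ denotes the corolla with $n+1$ leaves and one vertex, coloured by $x\in X_n$. *)

theory Defs
  imports Main "HOL-Library.Function_Algebras"
begin

text \<open>The graded
space in the sense of the paper is the (direct) sum of the A n inside 'a.\<close>

definition graded_vs :: "('k::field \<Rightarrow> 'a::ab_group_add \<Rightarrow> 'a) \<Rightarrow> (nat \<Rightarrow> 'a set) \<Rightarrow> bool" where
  "graded_vs sc A \<longleftrightarrow>
     (\<forall>c x y. sc c (x + y) = sc c x + sc c y) \<and>
     (\<forall>c d x. sc (c + d) x = sc c x + sc d x) \<and>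
     (\<forall>c d x. sc c (sc d x) = sc (c * d) x) \<and>
     (\<forall>x. sc 1 x = x) \<and>
     (\<forall>n. 0 \<in> A n \<and> (\<forall>x\<in>A n. \<forall>y\<in>A n. x + y \<in> A n) \<and> (\<forall>c. \<forall>x\<in>A n. sc c x \<in> A n)) \<and>
     (\<forall>N a. finite N \<longrightarrow> (\<forall>n\<in>N. a n \<in> A n) \<longrightarrow> (\<Sum>n\<in>N. a n) = 0 \<longrightarrow> (\<forall>n\<in>N. a n = 0))"

text \<open>op i x y stands for x \<bullet>_i y (defined for homogeneous x, y with i \<le> |y|).\<close>

definition preshuffle_algebra ::
  "('k::field \<Rightarrow> 'a::ab_group_add \<Rightarrow> 'a) \<Rightarrow> (nat \<Rightarrow> 'a set) \<Rightarrow> (nat \<Rightarrow> 'a \<Rightarrow> 'a \<Rightarrow> 'a) \<Rightarrow> bool" where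
  "preshuffle_algebra sc A op \<longleftrightarrow>
     graded_vs sc A \<and>
     (\<forall>i n m x y. x \<in> A n \<longrightarrow> y \<in> A m \<longrightarrow> i \<le> m \<longrightarrow> op i x y \<in> A (n + m)) \<and>
     (\<forall>i n m. i \<le> m \<longrightarrow>
        (\<forall>x\<in>A n. \<forall>x'\<in>A n. \<forall>y\<in>A m. op i (x + x') y = op i x y + op i x' y) \<and>
        (\<forall>x\<in>A n. \<forall>y\<in>A m. \<forall>y'\<in>A m. op i x (y + y') = op i x y + op i x y') \<and>
        (\<forall>c. \<forall>x\<in>A n. \<forall>y\<in>A m. op i (sc c x) y = sc c (op i x y)) \<and>
        (\<forall>c. \<forall>x\<in>A n. \<forall>y\<in>A m. op i x (sc c y) = sc c (op i x y))) \<and>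
     (\<forall>n m p x y z i j. x \<in> A n \<longrightarrow> y \<in> A m \<longrightarrow> z \<in> A p \<longrightarrow> i \<le> m \<longrightarrow> j \<le> p \<longrightarrow>
        op j (op i x y) z = op (i + j) x (op j y z))"

definition grafting_algebra ::
  "('k::field \<Rightarrow> 'a::ab_group_add \<Rightarrow> 'a) \<Rightarrow> (nat \<Rightarrow> 'a set) \<Rightarrow> (nat \<Rightarrow> 'a \<Rightarrow> 'a \<Rightarrow> 'a) \<Rightarrow> bool" where
  "grafting_algebra sc A op \<longleftrightarrow>
     preshuffle_algebra sc A op \<and>
     (\<forall>n m p x y z i j. x \<in> A n \<longrightarrow> y \<in> A m \<longrightarrow> z \<in> A p \<longrightarrow> i < j \<longrightarrow> j \<le> p \<longrightarrow>
        op i x (op j y z) = op (j + n) y (op i x z))"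

datatype 'x tree = Leaf | Node 'x "'x tree list"

fun nleaves :: "'x tree \<Rightarrow> nat" where
  "nleaves Leaf = 1"
| "nleaves (Node x ts) = sum_list (map nleaves ts)"

definition tdeg :: "'x tree \<Rightarrow> nat" where
  "tdeg t = nleaves t - 1"

text \<open>The graded set X is given by a set X with a degree function dg; X_n = {x \<in> X. dg x = n}.
A vertex with k+1 incoming edges must be coloured by an element of X_k.\<close>

fun wf_tree :: "'x set \<Rightarrow> ('x \<Rightarrow> nat) \<Rightarrow> 'x tree \<Rightarrow> bool" where
  "wf_tree X dg Leaf = True"
| "wf_tree X dg (Node x ts) = (x \<in> X \<and> length ts = dg x + 1 \<and> (\<forall>s\<in>set ts. wf_tree X dg s))"

text \<open>T_{n,X}: coloured planar rooted trees with n+1 leaves (the single leaf, which has no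
internal vertex, is excluded: trees in T_\<infinity> have degree \<ge> 1).\<close>

definition Trees :: "'x set \<Rightarrow> ('x \<Rightarrow> nat) \<Rightarrow> nat \<Rightarrow> 'x tree set" where
  "Trees X dg n = {t. t \<noteq> Leaf \<and> wf_tree X dg t \<and> tdeg t = n}"

definition Trees_inf :: "'x set \<Rightarrow> ('x \<Rightarrow> nat) \<Rightarrow> 'x tree set" where
  "Trees_inf X dg = (\<Union>n\<in>{1..}. Trees X dg n)"

text \<open>Grafting t \<circ>_i w: attach the root of t to the i-th leaf (numbered from 0, left to right) of w.\<close>

fun graft :: "'x tree \<Rightarrow> nat \<Rightarrow> 'x tree \<Rightarrow> 'x tree"
and graft_list :: "'x tree \<Rightarrow> nat \<Rightarrow> 'x tree list \<Rightarrow> 'x tree list" where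
  "graft t i Leaf = (if i = 0 then t else Leaf)"
| "graft t i (Node x ts) = Node x (graft_list t i ts)"
| "graft_list t i [] = []"
| "graft_list t i (s # ss) =
     (if i < nleaves s then graft t i s # ss else s # graft_list t (i - nleaves s) ss)"

definition corolla :: "('x \<Rightarrow> nat) \<Rightarrow> 'x \<Rightarrow> 'x tree" where
  "corolla dg x = Node x (replicate (dg x + 1) Leaf)"

fun binary_tree :: "'x tree \<Rightarrow> bool" where
  "binary_tree Leaf = True"
| "binary_tree (Node x ts) = (length ts = 2 \<and> (\<forall>s\<in>set ts. binary_tree s))"

text \<open>Linear combinations of trees are represented as functions 'x tree \<Rightarrow> 'k; the
component K[T_{n,X}] consists of the finitely supported ones supported on T_{n,X}.\<close>

definition tsc :: "'k::field \<Rightarrow> ('x tree \<Rightarrow> 'k) \<Rightarrow> ('x tree \<Rightarrow> 'k)" where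
  "tsc c f = (\<lambda>s. c * f s)"

definition basis_tree :: "'x tree \<Rightarrow> ('x tree \<Rightarrow> 'k::field)" where
  "basis_tree t = (\<lambda>s. if s = t then 1 else 0)"

definition KT :: "'x set \<Rightarrow> ('x \<Rightarrow> nat) \<Rightarrow> nat \<Rightarrow> ('x tree \<Rightarrow> 'k::field) set" where
  "KT X dg n = {f. finite {t. f t \<noteq> 0} \<and> (\<forall>t. f t \<noteq> 0 \<longrightarrow> t \<in> Trees X dg n)}"

definition KT_inf :: "'x set \<Rightarrow> ('x \<Rightarrow> nat) \<Rightarrow> ('x tree \<Rightarrow> 'k::field) set" where
  "KT_inf X dg = {f. finite {t. f t \<noteq> 0} \<and> (\<forall>t. f t \<noteq> 0 \<longrightarrow> t \<in> Trees_inf X dg)}"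

definition graft_op :: "nat \<Rightarrow> ('x tree \<Rightarrow> 'k::field) \<Rightarrow> ('x tree \<Rightarrow> 'k) \<Rightarrow> ('x tree \<Rightarrow> 'k)" where
  "graft_op i f g = (\<lambda>s. \<Sum>(t, w) \<in> {(t, w). f t \<noteq> 0 \<and> g w \<noteq> 0 \<and> graft t i w = s}. f t * g w)"

end

theory Submission
  imports Defs
begin

(* Grafting single trees is already associative and satisfies the exchange law, so its
   bilinear extension makes the span of the trees a grafting algebra.  Conversely, a tree
   Node x [s_0, ..., s_k] is obtained from the corolla of x by grafting s_k into leaf k,
   then s_(k-1) into leaf k - 1, and so on (skipping the children that are leaves).
   Evaluating this expression in a grafting algebra A gives the only candidate for Phi on
   trees.  It is compatible with grafting t into leaf i of a tree w: if leaf i lies inside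
   a child of w this is the associativity axiom, and if it lies to the right of a child it
   is the exchange axiom.  Uniqueness holds because every tree other than a corolla is a
   grafting of two smaller trees. *)

section \<open>Grafting of planar trees\<close>

lemma length_graft_list [simp]: "length (graft_list t i ss) = length ss"
  by (induction ss arbitrary: i) auto

lemma graft_neq_Leaf: "w \<noteq> Leaf \<Longrightarrow> graft t i w \<noteq> Leaf"
  by (cases w) auto

lemma nleaves_graft:
  "i < nleaves w \<Longrightarrow> nleaves (graft t i w) = nleaves w + nleaves t - 1"
  "i < sum_list (map nleaves ss) \<Longrightarrow>
     sum_list (map nleaves (graft_list t i ss)) = sum_list (map nleaves ss) + nleaves t - 1"
  by (induction t i w and t i ss rule: graft_graft_list.induct) auto

lemma wf_tree_graft:
  "wf_tree X dg t \<Longrightarrow> wf_tree X dg w \<Longrightarrow> wf_tree X dg (graft t i w)"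
  "wf_tree X dg t \<Longrightarrow> \<forall>s\<in>set ss. wf_tree X dg s \<Longrightarrow>
    \<forall>s\<in>set (graft_list t i ss). wf_tree X dg s"
  by (induction t i w and t i ss rule: graft_graft_list.induct) auto

lemma graft_graft:
  assumes "i < nleaves w"
  shows "j < nleaves u \<Longrightarrow> graft (graft t i w) j u = graft t (i + j) (graft w j u)"
    and "j < sum_list (map nleaves ss) \<Longrightarrow>
      graft_list (graft t i w) j ss = graft_list t (i + j) (graft_list w j ss)"
  using assms
  by (induction t j u and t j ss rule: graft_graft_list.induct) (auto simp: nleaves_graft)

lemma graft_exchange:
  assumes "nleaves t \<ge> 1"
  shows "i < j \<Longrightarrow> j < nleaves u \<Longrightarrow>
      graft t i (graft w j u) = graft w (j + tdeg t) (graft t i u)"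
    and "i < j \<Longrightarrow> j < sum_list (map nleaves ss) \<Longrightarrow>
      graft_list t i (graft_list w j ss) = graft_list w (j + tdeg t) (graft_list t i ss)"
  using assms
proof (induction w j u and w j ss arbitrary: i and i rule: graft_graft_list.induct)
  case (4 w j s ss)
  then show ?case by (auto simp: nleaves_graft tdeg_def)
qed (auto simp: tdeg_def)

lemma nleaves_pos: "wf_tree X dg t \<Longrightarrow> nleaves t \<ge> 1"
proof (induction t)
  case (Node x ss)
  then obtain s ss' where "ss = s # ss'"
    by (cases ss) auto
  with Node show ?case
    by fastforce
qed simp

lemma sum_nleaves:
  "\<forall>s\<in>set ss. wf_tree X dg s \<Longrightarrow> sum_list (map nleaves ss) = sum_list (map tdeg ss) + length ss"
  by (induction ss) (auto simp: tdeg_def dest: nleaves_pos)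

lemma tdeg_Node:
  "wf_tree X dg (Node x ss) \<Longrightarrow> tdeg (Node x ss) = dg x + sum_list (map tdeg ss)"
  using sum_nleaves[of ss X dg] by (simp add: tdeg_def)

lemma Trees_nleaves: "t \<in> Trees X dg n \<Longrightarrow> nleaves t = n + 1"
  unfolding Trees_def tdeg_def using nleaves_pos[of X dg t] by auto

lemma graft_Trees:
  assumes "t \<in> Trees X dg n" and "w \<in> Trees X dg m" and "i \<le> m"
  shows "graft t i w \<in> Trees X dg (n + m)"
proof -
  have "nleaves t = n + 1" "nleaves w = m + 1"
    using assms Trees_nleaves by blast+
  then have "nleaves (graft t i w) = n + m + 1"
    using assms(3) by (simp add: nleaves_graft)
  with assms show ?thesis
    unfolding Trees_def tdeg_def by (simp add: graft_neq_Leaf wf_tree_graft)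
qed

lemma Trees_inf_iff:
  assumes "\<forall>x\<in>X. dg x \<ge> 1"
  shows "t \<in> Trees_inf X dg \<longleftrightarrow> t \<noteq> Leaf \<and> wf_tree X dg t"
proof -
  have "tdeg t \<ge> 1" if "wf_tree X dg t" and "t = Node x ss" for x ss
    using that assms tdeg_Node[of X dg x ss] by fastforce
  then show ?thesis
    by (cases t) (auto simp: Trees_inf_def Trees_def)
qed

lemma corolla_or_graft:
  assumes pos: "\<forall>x\<in>X. dg x \<ge> 1" and t: "t \<in> Trees_inf X dg"
  obtains x where "x \<in> X" "t = corolla dg x"
  | s j u where "s \<in> Trees_inf X dg" "u \<in> Trees_inf X dg" "j \<le> tdeg u"
      "size s < size t" "size u < size t" "t = graft s j u"
proof -
  from t obtain x ss where t_Node: "t = Node x ss" and wf: "wf_tree X dg t"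
    by (cases t) (auto simp: Trees_inf_iff[OF pos])
  show thesis
  proof (cases "\<forall>s\<in>set ss. s = Leaf")
    case True
    then have "replicate (length ss) Leaf = ss"
      by (rule replicate_length_same)
    then have "t = corolla dg x"
      using wf by (simp add: t_Node corolla_def)
    moreover have "x \<in> X"
      using wf by (simp add: t_Node)
    ultimately show thesis
      by (rule that(1)[rotated])
  next
    case False
    then obtain ys s zs where ss: "ss = ys @ s # zs" and "s \<noteq> Leaf" and ys: "\<forall>y\<in>set ys. y = Leaf"
      using split_list_first_prop[of ss "\<lambda>s. s \<noteq> Leaf"] by blast
    define j where "j = length ys"
    define u where "u = Node x (ys @ Leaf # zs)"
    have ys_Leafs: "ys = replicate j Leaf"
      using ys by (simp add: j_def replicate_length_same)
    have "graft_list s j (replicate j Leaf @ Leaf # zs) = replicate j Leaf @ s # zs"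
      by (induction j) auto
    then have "t = graft s j u"
      by (simp add: t_Node u_def ss ys_Leafs)
    moreover have "s \<in> Trees_inf X dg" "u \<in> Trees_inf X dg"
      using wf \<open>s \<noteq> Leaf\<close> by (auto simp: Trees_inf_iff[OF pos] t_Node u_def ss)
    moreover have "j \<le> tdeg u"
      by (simp add: u_def tdeg_def ys_Leafs sum_list_replicate)
    moreover have "size s < size t" "size u < size t"
      using \<open>s \<noteq> Leaf\<close> by (cases s; simp add: t_Node u_def ss)+
    ultimately show thesis
      using that(2) by blast
  qed
qed

lemma graft_hom_eqI:
  assumes pos: "\<forall>x\<in>X. dg x \<ge> 1"
    and F: "\<forall>t\<in>Trees_inf X dg. \<forall>w\<in>Trees_inf X dg. \<forall>i\<le>tdeg w. F (graft t i w) = op i (F t) (F w)"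
    and H: "\<forall>t\<in>Trees_inf X dg. \<forall>w\<in>Trees_inf X dg. \<forall>i\<le>tdeg w. H (graft t i w) = op i (H t) (H w)"
    and corolla: "\<forall>x\<in>X. F (corolla dg x) = H (corolla dg x)"
  shows "t \<in> Trees_inf X dg \<Longrightarrow> F t = H t"
proof (induction t rule: measure_induct_rule[of size])
  case (less t)
  from pos less.prems show ?case
  proof (cases rule: corolla_or_graft)
    case (2 s j u)
    then show ?thesis
      using F H less.IH by metis
  qed (use corolla in simp)
qed

lemma wf_tree_binary: "wf_tree {x0} dg t \<Longrightarrow> dg x0 = 1 \<Longrightarrow> binary_tree t"
  by (induction t) auto

section \<open>Linear combinations of trees\<close>

definition supp :: "('b \<Rightarrow> 'k::zero) \<Rightarrow> 'b set" where
  "supp f = {t. f t \<noteq> 0}"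

definition finsupp_on :: "'b set \<Rightarrow> ('b \<Rightarrow> 'k::zero) set" where
  "finsupp_on S = {f. finite (supp f) \<and> supp f \<subseteq> S}"

lemma KT_eq_finsupp_on: "KT X dg n = finsupp_on (Trees X dg n)"
  by (auto simp: KT_def finsupp_on_def supp_def)

lemma KT_inf_eq_finsupp_on: "KT_inf X dg = finsupp_on (Trees_inf X dg)"
  by (auto simp: KT_inf_def finsupp_on_def supp_def)

lemma sum_fun_apply: "(\<Sum>p\<in>P. F p) s = (\<Sum>p\<in>P. F p s)"
  by (induction P rule: infinite_finite_induct) auto

(* Not [simp]: the simplifier would use it to eta-expand every partial application tsc c f. *)
lemma tsc_apply: "tsc c f t = c * f t"
  by (simp add: tsc_def)

lemma tsc_zero [simp]: "tsc 0 f = 0" "tsc c 0 = 0"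
  by (auto simp: fun_eq_iff tsc_def)

lemma tsc_one [simp]: "tsc 1 f = f"
  by (simp add: fun_eq_iff tsc_def)

lemma tsc_add_left: "tsc (c + d) f = tsc c f + tsc d f"
  by (simp add: fun_eq_iff tsc_def distrib_right)

lemma tsc_add_right: "tsc c (f + g) = tsc c f + tsc c g"
  by (simp add: fun_eq_iff tsc_def distrib_left)

lemma tsc_tsc: "tsc c (tsc d f) = tsc (c * d) f"
  by (simp add: fun_eq_iff tsc_def)

lemma tsc_sum: "tsc c (\<Sum>p\<in>P. F p) = (\<Sum>p\<in>P. tsc c (F p))"
  by (simp add: fun_eq_iff tsc_def sum_fun_apply sum_distrib_left)

lemma supp_add: "supp (f + g :: _ \<Rightarrow> 'k::monoid_add) \<subseteq> supp f \<union> supp g"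
  by (auto simp: supp_def)

lemma supp_tsc: "supp (tsc c f) \<subseteq> supp f"
  by (auto simp: supp_def tsc_def)

lemma supp_basis_tree [simp]: "supp (basis_tree t :: _ \<Rightarrow> 'k::field) = {t}"
  by (auto simp: supp_def basis_tree_def)

lemma zero_in_finsupp_on: "0 \<in> finsupp_on S"
  by (simp add: finsupp_on_def supp_def)

lemma add_in_finsupp_on:
  "(f :: _ \<Rightarrow> 'k::monoid_add) \<in> finsupp_on S \<Longrightarrow> g \<in> finsupp_on S \<Longrightarrow> f + g \<in> finsupp_on S"
  unfolding finsupp_on_def using supp_add[of f g] by (auto intro: finite_subset)

lemma tsc_in_finsupp_on: "f \<in> finsupp_on S \<Longrightarrow> tsc c f \<in> finsupp_on S"
  unfolding finsupp_on_def using supp_tsc[of c f] by (auto intro: finite_subset)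

lemma basis_tree_in_finsupp_on: "t \<in> S \<Longrightarrow> basis_tree t \<in> finsupp_on S"
  by (simp add: finsupp_on_def)

lemma sum_in_finsupp_on:
  "finite P \<Longrightarrow> (\<And>p. p \<in> P \<Longrightarrow> F p \<in> finsupp_on S) \<Longrightarrow> (\<Sum>p\<in>P. F p) \<in> finsupp_on S"
  by (induction P rule: finite_induct) (auto intro: zero_in_finsupp_on add_in_finsupp_on)

lemma finite_supp_sum:
  "finite P \<Longrightarrow> (\<And>p. p \<in> P \<Longrightarrow> finite (supp (F p))) \<Longrightarrow> finite (supp (\<Sum>p\<in>P. F p))"
  using sum_in_finsupp_on[of P F UNIV] by (simp add: finsupp_on_def)

lemma basis_tree_decomposition:
  assumes "finite (supp f)"
  shows "f = (\<Sum>t\<in>supp f. tsc (f t) (basis_tree t))"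
proof
  fix s
  have "(\<Sum>t\<in>supp f. tsc (f t) (basis_tree t)) s = (\<Sum>t\<in>supp f. if s = t then f t else 0)"
    by (simp add: sum_fun_apply tsc_def basis_tree_def if_distrib cong: if_cong)
  also have "\<dots> = f s"
    using assms by (simp add: supp_def)
  finally show "f s = (\<Sum>t\<in>supp f. tsc (f t) (basis_tree t)) s" ..
qed

lemma graft_op_expand:
  fixes f g :: "'x tree \<Rightarrow> 'k::field"
  assumes "finite S" "supp f \<subseteq> S" and "finite T" "supp g \<subseteq> T"
  shows "graft_op i f g = (\<Sum>t\<in>S. \<Sum>w\<in>T. tsc (f t * g w) (basis_tree (graft t i w)))"
proof
  fix s :: "'x tree"
  let ?c = "\<lambda>p. f (fst p) * g (snd p)" and ?hit = "\<lambda>p. graft (fst p) i (snd p) = s"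
  have "(\<Sum>t\<in>S. \<Sum>w\<in>T. tsc (f t * g w) (basis_tree (graft t i w))) s
      = (\<Sum>t\<in>S. \<Sum>w\<in>T. if graft t i w = s then f t * g w else 0)"
    by (simp add: sum_fun_apply tsc_def basis_tree_def eq_commute if_distrib cong: if_cong)
  also have "\<dots> = (\<Sum>p\<in>S \<times> T. if ?hit p then ?c p else 0)"
    by (simp add: sum.cartesian_product case_prod_unfold)
  also have "\<dots> = (\<Sum>p\<in>{p \<in> S \<times> T. ?hit p}. ?c p)"
    using assms by (simp add: sum.inter_filter)
  also have "\<dots> = (\<Sum>p\<in>{(t, w). f t \<noteq> 0 \<and> g w \<noteq> 0 \<and> graft t i w = s}. ?c p)"
    using assms by (intro sum.mono_neutral_right) (auto simp: supp_def)
  finally show "graft_op i f g s = (\<Sum>t\<in>S. \<Sum>w\<in>T. tsc (f t * g w) (basis_tree (graft t i w))) s"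
    by (simp add: graft_op_def case_prod_unfold)
qed

lemma graft_op_add_left:
  fixes f f' g :: "'x tree \<Rightarrow> 'k::field"
  assumes "finite (supp f)" "finite (supp f')" "finite (supp g)"
  shows "graft_op i (f + f') g = graft_op i f g + graft_op i f' g"
proof -
  let ?S = "supp f \<union> supp f'"
  have "graft_op i h g = (\<Sum>t\<in>?S. \<Sum>w\<in>supp g. tsc (h t * g w) (basis_tree (graft t i w)))"
    if "h \<in> {f, f', f + f'}" for h
    using that assms supp_add[of f f'] by (intro graft_op_expand) auto
  then show ?thesis
    by (simp add: distrib_right tsc_add_left sum.distrib)
qed

lemma graft_op_add_right:
  fixes f g g' :: "'x tree \<Rightarrow> 'k::field"
  assumes "finite (supp f)" "finite (supp g)" "finite (supp g')"
  shows "graft_op i f (g + g') = graft_op i f g + graft_op i f g'"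
proof -
  let ?T = "supp g \<union> supp g'"
  have "graft_op i f h = (\<Sum>t\<in>supp f. \<Sum>w\<in>?T. tsc (f t * h w) (basis_tree (graft t i w)))"
    if "h \<in> {g, g', g + g'}" for h
    using that assms supp_add[of g g'] by (intro graft_op_expand) auto
  then show ?thesis
    by (simp add: distrib_left tsc_add_left sum.distrib)
qed

lemma graft_op_tsc_left:
  fixes f g :: "'x tree \<Rightarrow> 'k::field"
  assumes "finite (supp f)" "finite (supp g)"
  shows "graft_op i (tsc c f) g = tsc c (graft_op i f g)"
proof -
  have "graft_op i h g = (\<Sum>t\<in>supp f. \<Sum>w\<in>supp g. tsc (h t * g w) (basis_tree (graft t i w)))"
    if "h \<in> {f, tsc c f}" for h
    using that assms supp_tsc[of c f] by (intro graft_op_expand) auto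
  then show ?thesis
    by (simp add: tsc_apply tsc_sum tsc_tsc mult.assoc)
qed

lemma graft_op_tsc_right:
  fixes f g :: "'x tree \<Rightarrow> 'k::field"
  assumes "finite (supp f)" "finite (supp g)"
  shows "graft_op i f (tsc c g) = tsc c (graft_op i f g)"
proof -
  have "graft_op i f h = (\<Sum>t\<in>supp f. \<Sum>w\<in>supp g. tsc (f t * h w) (basis_tree (graft t i w)))"
    if "h \<in> {g, tsc c g}" for h
    using that assms supp_tsc[of c g] by (intro graft_op_expand) auto
  then show ?thesis
    by (simp add: tsc_apply tsc_sum tsc_tsc mult.left_commute)
qed

lemma graft_op_zero [simp]: "graft_op i 0 g = 0" "graft_op i f 0 = 0"
  by (simp_all add: graft_op_def fun_eq_iff)

lemma graft_op_sum_left: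
  fixes F :: "'p \<Rightarrow> 'x tree \<Rightarrow> 'k::field"
  assumes "finite P" "\<And>p. p \<in> P \<Longrightarrow> finite (supp (F p))" "finite (supp g)"
  shows "graft_op i (\<Sum>p\<in>P. F p) g = (\<Sum>p\<in>P. graft_op i (F p) g)"
  using assms
  by (induction P rule: finite_induct) (simp_all add: graft_op_add_left finite_supp_sum)

lemma graft_op_sum_right:
  fixes G :: "'q \<Rightarrow> 'x tree \<Rightarrow> 'k::field"
  assumes "finite Q" "\<And>q. q \<in> Q \<Longrightarrow> finite (supp (G q))" "finite (supp f)"
  shows "graft_op i f (\<Sum>q\<in>Q. G q) = (\<Sum>q\<in>Q. graft_op i f (G q))"
  using assms
  by (induction Q rule: finite_induct) (simp_all add: graft_op_add_right finite_supp_sum)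

lemma graft_op_basis_tree:
  "graft_op i (basis_tree t) (basis_tree w :: _ \<Rightarrow> 'k::field) = basis_tree (graft t i w)"
proof -
  have "graft_op i (basis_tree t) (basis_tree w :: _ \<Rightarrow> 'k) =
      (\<Sum>t'\<in>{t}. \<Sum>w'\<in>{w}. tsc (basis_tree t t' * basis_tree w w') (basis_tree (graft t' i w')))"
    by (rule graft_op_expand) simp_all
  then show ?thesis
    by (simp add: basis_tree_def)
qed

lemma graft_op_lincomb:
  fixes c :: "'p \<Rightarrow> 'k::field" and d :: "'q \<Rightarrow> 'k" and a :: "'p \<Rightarrow> 'x tree" and b :: "'q \<Rightarrow> 'x tree"
  assumes "finite P" "finite Q"
  shows "graft_op i (\<Sum>p\<in>P. tsc (c p) (basis_tree (a p))) (\<Sum>q\<in>Q. tsc (d q) (basis_tree (b q)))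
       = (\<Sum>p\<in>P. \<Sum>q\<in>Q. tsc (c p * d q) (basis_tree (graft (a p) i (b q))))"
proof -
  have fin: "finite (supp (tsc e (basis_tree t) :: 'x tree \<Rightarrow> 'k))" for e t
    using supp_tsc[of e "basis_tree t :: 'x tree \<Rightarrow> 'k"] by (auto intro: finite_subset)
  have "graft_op i (\<Sum>p\<in>P. tsc (c p) (basis_tree (a p))) (\<Sum>q\<in>Q. tsc (d q) (basis_tree (b q)))
      = (\<Sum>p\<in>P. \<Sum>q\<in>Q. graft_op i (tsc (c p) (basis_tree (a p))) (tsc (d q) (basis_tree (b q))))"
    using assms fin by (simp add: graft_op_sum_left graft_op_sum_right finite_supp_sum) (rule sum.swap)
  also have "\<dots> = (\<Sum>p\<in>P. \<Sum>q\<in>Q. tsc (c p * d q) (basis_tree (graft (a p) i (b q))))"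
    using fin by (simp add: graft_op_tsc_left graft_op_tsc_right graft_op_basis_tree tsc_tsc mult.commute)
  finally show ?thesis .
qed

lemma graft_op_expand_supp:
  fixes f g :: "'x tree \<Rightarrow> 'k::field"
  assumes "finite (supp f)" "finite (supp g)"
  shows "graft_op i f g =
    (\<Sum>p\<in>supp f \<times> supp g. tsc (f (fst p) * g (snd p)) (basis_tree (graft (fst p) i (snd p))))"
  using assms by (simp add: graft_op_expand[of "supp f" f "supp g" g] sum.cartesian_product')

lemma graft_op_graft_op_left:
  fixes f g h :: "'x tree \<Rightarrow> 'k::field"
  assumes "finite (supp f)" "finite (supp g)" "finite (supp h)"
  shows "graft_op j (graft_op i f g) h = (\<Sum>t\<in>supp f. \<Sum>w\<in>supp g. \<Sum>u\<in>supp h.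
    tsc (f t * g w * h u) (basis_tree (graft (graft t i w) j u)))"
proof -
  have "graft_op j (graft_op i f g) h =
      graft_op j (\<Sum>p\<in>supp f \<times> supp g. tsc (f (fst p) * g (snd p)) (basis_tree (graft (fst p) i (snd p))))
        (\<Sum>u\<in>supp h. tsc (h u) (basis_tree u))"
    using assms by (simp flip: basis_tree_decomposition graft_op_expand_supp)
  also have "\<dots> = (\<Sum>p\<in>supp f \<times> supp g. \<Sum>u\<in>supp h.
      tsc (f (fst p) * g (snd p) * h u) (basis_tree (graft (graft (fst p) i (snd p)) j u)))"
    using assms by (simp add: graft_op_lincomb)
  finally show ?thesis
    by (simp add: sum.cartesian_product')
qed

lemma graft_op_graft_op_right:
  fixes f g h :: "'x tree \<Rightarrow> 'k::field"
  assumes "finite (supp f)" "finite (supp g)" "finite (supp h)"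
  shows "graft_op i f (graft_op j g h) = (\<Sum>t\<in>supp f. \<Sum>w\<in>supp g. \<Sum>u\<in>supp h.
    tsc (f t * g w * h u) (basis_tree (graft t i (graft w j u))))"
proof -
  have "graft_op i f (graft_op j g h) =
      graft_op i (\<Sum>t\<in>supp f. tsc (f t) (basis_tree t))
        (\<Sum>p\<in>supp g \<times> supp h. tsc (g (fst p) * h (snd p)) (basis_tree (graft (fst p) j (snd p))))"
    using assms by (simp flip: basis_tree_decomposition graft_op_expand_supp)
  also have "\<dots> = (\<Sum>t\<in>supp f. \<Sum>p\<in>supp g \<times> supp h.
      tsc (f t * (g (fst p) * h (snd p))) (basis_tree (graft t i (graft (fst p) j (snd p)))))"
    using assms by (simp add: graft_op_lincomb)
  finally show ?thesis
    by (simp add: sum.cartesian_product' mult.assoc)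
qed

lemma graft_op_KT:
  assumes "f \<in> KT X dg n" and "g \<in> KT X dg m" and "i \<le> m"
  shows "graft_op i f g \<in> KT X dg (n + m)"
proof -
  have "finite (supp f)" "supp f \<subseteq> Trees X dg n" "finite (supp g)" "supp g \<subseteq> Trees X dg m"
    using assms by (simp_all add: KT_eq_finsupp_on finsupp_on_def)
  then show ?thesis
    using assms(3) unfolding KT_eq_finsupp_on
    by (subst graft_op_expand_supp)
      (auto intro!: sum_in_finsupp_on tsc_in_finsupp_on basis_tree_in_finsupp_on graft_Trees)
qed

lemma graft_op_assoc_KT:
  fixes f g h :: "'x tree \<Rightarrow> 'k::field"
  assumes f: "f \<in> KT X dg n" and g: "g \<in> KT X dg m" and h: "h \<in> KT X dg p"
    and "i \<le> m" and "j \<le> p"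
  shows "graft_op j (graft_op i f g) h = graft_op (i + j) f (graft_op j g h)"
proof -
  have "graft (graft t i w) j u = graft t (i + j) (graft w j u)"
    if "w \<in> supp g" "u \<in> supp h" for t w u
    using that assms Trees_nleaves[of w X dg m] Trees_nleaves[of u X dg p]
    by (intro graft_graft) (auto simp: KT_eq_finsupp_on finsupp_on_def)
  with assms show ?thesis
    by (simp add: graft_op_graft_op_left graft_op_graft_op_right KT_eq_finsupp_on finsupp_on_def)
qed

lemma graft_op_exchange_KT:
  fixes f g h :: "'x tree \<Rightarrow> 'k::field"
  assumes f: "f \<in> KT X dg n" and g: "g \<in> KT X dg m" and h: "h \<in> KT X dg p"
    and "i < j" and "j \<le> p"
  shows "graft_op i f (graft_op j g h) = graft_op (j + n) g (graft_op i f h)"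
proof -
  have fin: "finite (supp f)" "finite (supp g)" "finite (supp h)"
    using f g h by (simp_all add: KT_eq_finsupp_on finsupp_on_def)
  have "graft t i (graft w j u) = graft w (j + n) (graft t i u)"
    if "t \<in> supp f" "u \<in> supp h" for t w u
    using that assms Trees_nleaves[of t X dg n] Trees_nleaves[of u X dg p]
    by (subst graft_exchange) (auto simp: KT_eq_finsupp_on finsupp_on_def tdeg_def)
  then have "graft_op i f (graft_op j g h) = (\<Sum>t\<in>supp f. \<Sum>w\<in>supp g. \<Sum>u\<in>supp h.
      tsc (g w * f t * h u) (basis_tree (graft w (j + n) (graft t i u))))"
    using fin by (simp add: graft_op_graft_op_right mult.commute)
  also have "\<dots> = graft_op (j + n) g (graft_op i f h)"
    using fin by (simp add: graft_op_graft_op_right) (rule sum.swap)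
  finally show ?thesis .
qed

lemma KT_direct_sum:
  assumes "finite N" and "\<forall>n\<in>N. a n \<in> KT X dg n" and "(\<Sum>n\<in>N. a n) = 0" and "n \<in> N"
  shows "a n = 0"
proof
  fix t
  have outside: "a m t = 0" if "m \<in> N" "m \<noteq> tdeg t" for m
    using that assms(2) by (auto simp: KT_def Trees_def)
  show "a n t = 0 t"
  proof (cases "n = tdeg t")
    case True
    have "(\<Sum>m\<in>N - {n}. a m t) = 0"
      using True outside by (intro sum.neutral) auto
    then have "(\<Sum>m\<in>N. a m t) = a n t"
      using assms(1,4) by (simp add: sum.remove)
    with assms(3) show ?thesis
      by (simp add: sum_fun_apply[symmetric])
  qed (use outside assms(4) in simp)
qed

lemma grafting_algebra_KT:
  fixes X :: "'x set"
  shows "grafting_algebra (tsc :: 'k::field \<Rightarrow> _) (KT X dg) graft_op"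
proof -
  have fin: "finite (supp f)" if "f \<in> KT X dg n" for f :: "'x tree \<Rightarrow> 'k" and n
    using that by (simp add: KT_eq_finsupp_on finsupp_on_def)
  have "graded_vs (tsc :: 'k \<Rightarrow> _) (KT X dg)"
    unfolding graded_vs_def
  proof (intro conjI allI impI ballI)
    fix N and a :: "nat \<Rightarrow> 'x tree \<Rightarrow> 'k" and n
    assume "finite N" "\<forall>n\<in>N. a n \<in> KT X dg n" "sum a N = 0" "n \<in> N"
    then show "a n = 0"
      by (rule KT_direct_sum)
  qed (simp_all add: tsc_add_left tsc_add_right tsc_tsc KT_eq_finsupp_on zero_in_finsupp_on
      add_in_finsupp_on tsc_in_finsupp_on)
  then show ?thesis
    unfolding grafting_algebra_def preshuffle_algebra_def
    by (intro conjI allI impI ballI)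
      (simp_all add: graft_op_KT graft_op_assoc_KT graft_op_exchange_KT fin graft_op_add_left
        graft_op_add_right graft_op_tsc_left graft_op_tsc_right)
qed

section \<open>Linear maps into a grafting algebra\<close>

locale graded_space =
  fixes sc :: "'k::field \<Rightarrow> 'a::ab_group_add \<Rightarrow> 'a" and A :: "nat \<Rightarrow> 'a set"
  assumes graded_vs: "graded_vs sc A"
begin

lemma scale_add_left: "sc (c + d) x = sc c x + sc d x"
  using graded_vs by (simp add: graded_vs_def)

lemma scale_add_right: "sc c (x + y) = sc c x + sc c y"
  using graded_vs by (simp add: graded_vs_def)

lemma scale_scale: "sc c (sc d x) = sc (c * d) x"
  using graded_vs by (simp add: graded_vs_def)

lemma scale_one: "sc 1 x = x"
  using graded_vs by (simp add: graded_vs_def)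

lemma scale_zero_left: "sc 0 x = 0"
  using scale_add_left[of 0 0 x] by simp

lemma scale_zero_right: "sc c 0 = 0"
  using scale_add_right[of c 0 0] by simp

lemma scale_sum: "sc c (\<Sum>p\<in>P. F p) = (\<Sum>p\<in>P. sc c (F p))"
  by (induction P rule: infinite_finite_induct) (simp_all add: scale_zero_right scale_add_right)

lemma scale_mem: "x \<in> A n \<Longrightarrow> sc c x \<in> A n"
  using graded_vs by (simp add: graded_vs_def)

lemma sum_mem: "(\<And>p. p \<in> P \<Longrightarrow> F p \<in> A n) \<Longrightarrow> (\<Sum>p\<in>P. F p) \<in> A n"
  using graded_vs
  by (induction P rule: infinite_finite_induct) (simp_all add: graded_vs_def)

end

definition lin_ext ::
  "('k::zero \<Rightarrow> 'a \<Rightarrow> 'a::comm_monoid_add) \<Rightarrow> ('b \<Rightarrow> 'a) \<Rightarrow> ('b \<Rightarrow> 'k) \<Rightarrow> 'a"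
where
  "lin_ext sc v f = (\<Sum>t\<in>supp f. sc (f t) (v t))"

context graded_space
begin

lemma lin_ext_eq:
  assumes "finite S" "supp f \<subseteq> S"
  shows "lin_ext sc v f = (\<Sum>t\<in>S. sc (f t) (v t))"
  unfolding lin_ext_def using assms
  by (intro sum.mono_neutral_left) (auto simp: supp_def scale_zero_left)

lemma lin_ext_add:
  assumes "finite (supp f)" "finite (supp g)"
  shows "lin_ext sc v (f + g) = lin_ext sc v f + lin_ext sc v g"
  using assms supp_add[of f g]
  by (simp add: lin_ext_eq[of "supp f \<union> supp g"] scale_add_left sum.distrib)

lemma lin_ext_tsc:
  assumes "finite (supp f)"
  shows "lin_ext sc v (tsc c f) = sc c (lin_ext sc v f)"
proof -
  have "lin_ext sc v (tsc c f) = (\<Sum>t\<in>supp f. sc (c * f t) (v t))"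
    using assms supp_tsc[of c f] by (simp add: lin_ext_eq tsc_apply)
  then show ?thesis
    by (simp add: lin_ext_def scale_sum scale_scale)
qed

lemma lin_ext_basis_tree: "lin_ext sc v (basis_tree t) = v t"
  unfolding lin_ext_def supp_basis_tree by (simp add: basis_tree_def scale_one)

lemma lin_ext_mem: "(\<And>t. t \<in> supp f \<Longrightarrow> v t \<in> A n) \<Longrightarrow> lin_ext sc v f \<in> A n"
  unfolding lin_ext_def by (intro sum_mem scale_mem)

lemma linear_on_finsupp_sum:
  assumes add: "\<forall>f\<in>finsupp_on S. \<forall>g\<in>finsupp_on S. \<Psi> (f + g) = \<Psi> f + \<Psi> g"
    and scale: "\<forall>c. \<forall>f\<in>finsupp_on S. \<Psi> (tsc c f) = sc c (\<Psi> f)"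
    and "finite T" "T \<subseteq> S"
  shows "\<Psi> (\<Sum>t\<in>T. tsc (c t) (basis_tree t)) = (\<Sum>t\<in>T. sc (c t) (\<Psi> (basis_tree t)))"
  using assms(3,4)
proof (induction T rule: finite_induct)
  case empty
  have "\<Psi> 0 = sc 0 (\<Psi> 0)"
    using scale zero_in_finsupp_on by fastforce
  then show ?case
    by (simp only: sum.empty scale_zero_left)
next
  case (insert t T)
  let ?b = "tsc (c t) (basis_tree t)" and ?r = "\<Sum>t\<in>T. tsc (c t) (basis_tree t)"
  have mem: "?b \<in> finsupp_on S" "?r \<in> finsupp_on S" "basis_tree t \<in> finsupp_on S"
    using insert by (auto intro!: tsc_in_finsupp_on basis_tree_in_finsupp_on sum_in_finsupp_on)
  have "\<Psi> (\<Sum>t\<in>insert t T. tsc (c t) (basis_tree t)) = \<Psi> (?b + ?r)"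
    using insert.hyps by (subst sum.insert) auto
  also have "\<dots> = \<Psi> ?b + \<Psi> ?r"
    using add mem by blast
  also have "\<dots> = sc (c t) (\<Psi> (basis_tree t)) + (\<Sum>t\<in>T. sc (c t) (\<Psi> (basis_tree t)))"
    using scale[rule_format, OF mem(3)] insert by simp
  also have "\<dots> = (\<Sum>t\<in>insert t T. sc (c t) (\<Psi> (basis_tree t)))"
    using insert.hyps by simp
  finally show ?case .
qed

lemma linear_on_finsupp_eq_lin_ext:
  assumes "\<forall>f\<in>finsupp_on S. \<forall>g\<in>finsupp_on S. \<Psi> (f + g) = \<Psi> f + \<Psi> g"
    and "\<forall>c. \<forall>f\<in>finsupp_on S. \<Psi> (tsc c f) = sc c (\<Psi> f)"
    and f: "f \<in> finsupp_on S"
  shows "\<Psi> f = lin_ext sc (\<lambda>t. \<Psi> (basis_tree t)) f"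
proof -
  have fin: "finite (supp f)" "supp f \<subseteq> S"
    using f by (simp_all add: finsupp_on_def)
  have "\<Psi> f = \<Psi> (\<Sum>t\<in>supp f. tsc (f t) (basis_tree t))"
    using basis_tree_decomposition[OF fin(1)] by (rule arg_cong)
  also have "\<dots> = lin_ext sc (\<lambda>t. \<Psi> (basis_tree t)) f"
    using linear_on_finsupp_sum[OF assms(1,2) fin] by (simp add: lin_ext_def)
  finally show ?thesis .
qed

end

locale grafting_space =
  fixes sc :: "'k::field \<Rightarrow> 'a::ab_group_add \<Rightarrow> 'a" and A :: "nat \<Rightarrow> 'a set"
    and op :: "nat \<Rightarrow> 'a \<Rightarrow> 'a \<Rightarrow> 'a"
  assumes grafting_algebra: "grafting_algebra sc A op"

sublocale grafting_space \<subseteq> graded_space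
  using grafting_algebra by unfold_locales (simp add: grafting_algebra_def preshuffle_algebra_def)

context grafting_space
begin

lemma op_mem: "x \<in> A n \<Longrightarrow> y \<in> A m \<Longrightarrow> i \<le> m \<Longrightarrow> op i x y \<in> A (n + m)"
  using grafting_algebra by (simp add: grafting_algebra_def preshuffle_algebra_def)

lemma op_assoc:
  "x \<in> A n \<Longrightarrow> y \<in> A m \<Longrightarrow> z \<in> A p \<Longrightarrow> i \<le> m \<Longrightarrow> j \<le> p \<Longrightarrow>
    op j (op i x y) z = op (i + j) x (op j y z)"
  using grafting_algebra by (simp add: grafting_algebra_def preshuffle_algebra_def)

lemma op_exchange:
  "x \<in> A n \<Longrightarrow> y \<in> A m \<Longrightarrow> z \<in> A p \<Longrightarrow> i < j \<Longrightarrow> j \<le> p \<Longrightarrow>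
    op i x (op j y z) = op (j + n) y (op i x z)"
  using grafting_algebra by (simp add: grafting_algebra_def)

end

definition grafting_extension ::
  "'x set \<Rightarrow> ('x \<Rightarrow> nat) \<Rightarrow> ('k::field \<Rightarrow> 'a \<Rightarrow> 'a) \<Rightarrow> (nat \<Rightarrow> 'a::ab_group_add set) \<Rightarrow>
    (nat \<Rightarrow> 'a \<Rightarrow> 'a \<Rightarrow> 'a) \<Rightarrow> ('x \<Rightarrow> 'a) \<Rightarrow> (('x tree \<Rightarrow> 'k) \<Rightarrow> 'a) \<Rightarrow> bool"
where
  "grafting_extension X dg sc A op \<phi> \<Phi> \<longleftrightarrow>
     (\<forall>f\<in>KT_inf X dg. \<forall>g\<in>KT_inf X dg. \<Phi> (f + g) = \<Phi> f + \<Phi> g) \<and>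
     (\<forall>c. \<forall>f\<in>KT_inf X dg. \<Phi> (tsc c f) = sc c (\<Phi> f)) \<and>
     (\<forall>n. \<forall>f\<in>KT X dg n. \<Phi> f \<in> A n) \<and>
     (\<forall>t\<in>Trees_inf X dg. \<forall>w\<in>Trees_inf X dg. \<forall>i\<le>tdeg w.
        \<Phi> (basis_tree (graft t i w)) = op i (\<Phi> (basis_tree t)) (\<Phi> (basis_tree w))) \<and>
     (\<forall>x\<in>X. \<Phi> (basis_tree (corolla dg x)) = \<phi> x)"

locale grafting_space_with_generators = grafting_space +
  fixes X :: "'x set" and dg :: "'x \<Rightarrow> nat" and \<phi> :: "'x \<Rightarrow> 'a::ab_group_add"
  assumes generator_mem: "x \<in> X \<Longrightarrow> \<phi> x \<in> A (dg x)"
begin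

(* tree_eval (Node x [s_0, ..., s_k]) = e_0 \<bullet>_0 (e_1 \<bullet>_1 (... (e_k \<bullet>_k \<phi> x))) with
   e_j = tree_eval s_j, where the factors with s_j = Leaf are omitted.  The value at Leaf is
   never used. *)

fun tree_eval :: "'x tree \<Rightarrow> 'a"
  and graft_children :: "'a \<Rightarrow> nat \<Rightarrow> 'x tree list \<Rightarrow> 'a"
where
  "tree_eval Leaf = undefined"
| "tree_eval (Node x ss) = graft_children (\<phi> x) 0 ss"
| "graft_children a k [] = a"
| "graft_children a k (s # ss) =
     (if s = Leaf then graft_children a (Suc k) ss
      else op k (tree_eval s) (graft_children a (Suc k) ss))"

lemma graft_children_Leafs: "graft_children a k (replicate n Leaf) = a"
  by (induction n arbitrary: k) auto

lemma tree_eval_corolla: "tree_eval (corolla dg x) = \<phi> x"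
  by (simp add: corolla_def graft_children_Leafs)

lemma tree_eval_mem:
  shows "wf_tree X dg t \<Longrightarrow> t \<noteq> Leaf \<Longrightarrow> tree_eval t \<in> A (tdeg t)"
    and "a \<in> A p \<Longrightarrow> \<forall>s\<in>set ss. wf_tree X dg s \<Longrightarrow> k + length ss \<le> p + 1 \<Longrightarrow>
      graft_children a k ss \<in> A (p + sum_list (map tdeg ss))"
proof (induction t and a k ss arbitrary: and p rule: tree_eval_graft_children.induct)
  case (2 x ss)
  then have "graft_children (\<phi> x) 0 ss \<in> A (dg x + sum_list (map tdeg ss))"
    using generator_mem by simp
  with tdeg_Node[OF "2.prems"(1)] show ?case
    by simp
next
  case (4 a k s ss)
  show ?case
  proof (cases "s = Leaf")
    case True
    with 4 show ?thesis
      by (simp add: tdeg_def)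
  next
    case False
    with 4 have "op k (tree_eval s) (graft_children a (Suc k) ss)
        \<in> A (tdeg s + (p + sum_list (map tdeg ss)))"
      by (intro op_mem) auto
    with False show ?thesis
      by (simp add: add_ac)
  qed
qed auto

lemma tree_eval_graft:
  assumes t: "wf_tree X dg t" "t \<noteq> Leaf"
  shows "wf_tree X dg w \<Longrightarrow> w \<noteq> Leaf \<Longrightarrow> i < nleaves w \<Longrightarrow>
      tree_eval (graft t i w) = op i (tree_eval t) (tree_eval w)"
    and "a \<in> A p \<Longrightarrow> \<forall>s\<in>set ss. wf_tree X dg s \<Longrightarrow> k + length ss \<le> p + 1 \<Longrightarrow>
      k \<le> i \<Longrightarrow> i < k + sum_list (map nleaves ss) \<Longrightarrow>
      op i (tree_eval t) (graft_children a k ss) = graft_children a k (graft_list t (i - k) ss)"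
proof (induction w and a k ss arbitrary: i and p i rule: tree_eval_graft_children.induct)
  case (2 x ss)
  then show ?case
    using "2.IH"[of "dg x" i] generator_mem by simp
next
  case (4 a k s ss)
  from "4.prems" have a: "a \<in> A p" and wf_s: "wf_tree X dg s"
    and wf_ss: "\<forall>s\<in>set ss. wf_tree X dg s" and len: "Suc k + length ss \<le> p + 1"
    and ki: "k \<le> i" and ik: "i < k + nleaves s + sum_list (map nleaves ss)"
    by auto
  let ?T = "tree_eval t" and ?Z = "graft_children a (Suc k) ss"
  have T: "?T \<in> A (tdeg t)" and Z: "?Z \<in> A (p + sum_list (map tdeg ss))"
    using t tree_eval_mem(2)[OF a wf_ss len] by (auto intro: tree_eval_mem)
  have ss: "sum_list (map nleaves ss) = sum_list (map tdeg ss) + length ss"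
    using sum_nleaves[OF wf_ss] .
  let ?S = "tree_eval s"
  have S: "?S \<in> A (tdeg s)" if "s \<noteq> Leaf"
    using that wf_s tree_eval_mem(1) by blast
  have ns: "nleaves s = tdeg s + 1"
    using nleaves_pos[OF wf_s] by (simp add: tdeg_def)
  consider (at_leaf) "s = Leaf" "i = k" | (right_of_leaf) "s = Leaf" "i \<noteq> k"
    | (inside) "s \<noteq> Leaf" "i - k < nleaves s" | (right_of_tree) "s \<noteq> Leaf" "\<not> i - k < nleaves s"
    by blast
  then show ?case
  proof cases
    case at_leaf
    with t show ?thesis
      by simp
  next
    case right_of_leaf
    then have "op i ?T ?Z = graft_children a (Suc k) (graft_list t (i - Suc k) ss)"
      using ki ik by (intro "4.IH"(1)[OF _ a wf_ss len]) auto
    with right_of_leaf ki show ?thesis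
      by (simp add: Suc_diff_Suc)
  next
    case inside
    have "tree_eval (graft t (i - k) s) = op (i - k) ?T ?S"
      using inside wf_s by (intro "4.IH"(2))
    moreover have "op k (op (i - k) ?T ?S) ?Z = op i ?T (op k ?S ?Z)"
      using op_assoc[OF T S[OF inside(1)] Z, of "i - k" k] inside ns ki len by simp
    ultimately show ?thesis
      using inside by (simp add: graft_neq_Leaf)
  next
    case right_of_tree
    have "op k ?S (op (i - tdeg s) ?T ?Z) = op i ?T (op k ?S ?Z)"
      using op_exchange[OF S[OF right_of_tree(1)] T Z, of k "i - tdeg s"] right_of_tree ns ss ik len by simp
    moreover have "op (i - tdeg s) ?T ?Z =
        graft_children a (Suc k) (graft_list t (i - tdeg s - Suc k) ss)"
      using right_of_tree ns ik by (intro "4.IH"(3)[OF _ a wf_ss len]) auto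
    moreover have "i - k - nleaves s = i - tdeg s - Suc k"
      using ns by simp
    ultimately show ?thesis
      using right_of_tree by simp
  qed
qed auto

lemma grafting_extension_lin_ext: "grafting_extension X dg sc A op \<phi> (lin_ext sc tree_eval)"
proof -
  have tree: "t \<noteq> Leaf" "wf_tree X dg t" if "t \<in> Trees_inf X dg" for t
    using that by (auto simp: Trees_inf_def Trees_def)
  have "tree_eval (graft t i w) = op i (tree_eval t) (tree_eval w)"
    if "t \<in> Trees_inf X dg" "w \<in> Trees_inf X dg" "i \<le> tdeg w" for t w i
    using that tree[OF that(1)] tree[OF that(2)] nleaves_pos[of X dg w]
    by (intro tree_eval_graft) (auto simp: tdeg_def)
  moreover have "lin_ext sc tree_eval f \<in> A n" if "f \<in> KT X dg n" for f n
    using that tree_eval_mem(1)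
    by (intro lin_ext_mem) (auto simp: KT_def Trees_def supp_def)
  ultimately show ?thesis
    unfolding grafting_extension_def
    by (simp add: KT_inf_eq_finsupp_on finsupp_on_def lin_ext_add lin_ext_tsc lin_ext_basis_tree
        tree_eval_corolla)
qed

lemma grafting_extension_unique:
  assumes pos: "\<forall>x\<in>X. dg x \<ge> 1"
    and \<Psi>: "grafting_extension X dg sc A op \<phi> \<Psi>" and f: "f \<in> KT_inf X dg"
  shows "\<Psi> f = lin_ext sc tree_eval f"
proof -
  have "\<Psi> (basis_tree t) = tree_eval t" if "t \<in> Trees_inf X dg" for t
    using graft_hom_eqI[OF pos, of "\<lambda>t. \<Psi> (basis_tree t)" op tree_eval] that \<Psi>
      grafting_extension_lin_ext
    by (simp add: grafting_extension_def lin_ext_basis_tree)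
  moreover have "\<Psi> f = lin_ext sc (\<lambda>t. \<Psi> (basis_tree t)) f"
    using \<Psi> f unfolding grafting_extension_def KT_inf_eq_finsupp_on
    by (intro linear_on_finsupp_eq_lin_ext) blast+
  ultimately show ?thesis
    using f by (simp add: lin_ext_def KT_inf_def supp_def)
qed

lemma free_grafting_extension:
  assumes "\<forall>x\<in>X. dg x \<ge> 1"
  shows "\<exists>\<Phi>. grafting_extension X dg sc A op \<phi> \<Phi> \<and>
    (\<forall>\<Psi>. grafting_extension X dg sc A op \<phi> \<Psi> \<longrightarrow> (\<forall>f\<in>KT_inf X dg. \<Psi> f = \<Phi> f))"
  using grafting_extension_lin_ext grafting_extension_unique[OF assms] by blast

end

theorem mainTheorem16:
  fixes X :: "'x set" and dg :: "'x \<Rightarrow> nat"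
  assumes pos: "\<forall>x\<in>X. dg x \<ge> 1"
  shows
    "grafting_algebra (tsc :: 'k::field \<Rightarrow> _) (KT X dg) graft_op
     \<and>
     (\<forall>(sc :: 'k \<Rightarrow> 'a::ab_group_add \<Rightarrow> 'a) A op (\<phi> :: 'x \<Rightarrow> 'a).
        grafting_algebra sc A op \<longrightarrow> (\<forall>x\<in>X. \<phi> x \<in> A (dg x)) \<longrightarrow>
        (\<exists>\<Phi> :: ('x tree \<Rightarrow> 'k) \<Rightarrow> 'a.
           ((\<forall>f\<in>KT_inf X dg. \<forall>g\<in>KT_inf X dg. \<Phi> (f + g) = \<Phi> f + \<Phi> g) \<and>
            (\<forall>c. \<forall>f\<in>KT_inf X dg. \<Phi> (tsc c f) = sc c (\<Phi> f)) \<and>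
            (\<forall>n. \<forall>f\<in>KT X dg n. \<Phi> f \<in> A n) \<and>
            (\<forall>t\<in>Trees_inf X dg. \<forall>w\<in>Trees_inf X dg. \<forall>i\<le>tdeg w.
               \<Phi> (basis_tree (graft t i w)) = op i (\<Phi> (basis_tree t)) (\<Phi> (basis_tree w))) \<and>
            (\<forall>x\<in>X. \<Phi> (basis_tree (corolla dg x)) = \<phi> x))
           \<and>
           (\<forall>\<Psi> :: ('x tree \<Rightarrow> 'k) \<Rightarrow> 'a.
              ((\<forall>f\<in>KT_inf X dg. \<forall>g\<in>KT_inf X dg. \<Psi> (f + g) = \<Psi> f + \<Psi> g) \<and>
               (\<forall>c. \<forall>f\<in>KT_inf X dg. \<Psi> (tsc c f) = sc c (\<Psi> f)) \<and>
               (\<forall>n. \<forall>f\<in>KT X dg n. \<Psi> f \<in> A n) \<and>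
               (\<forall>t\<in>Trees_inf X dg. \<forall>w\<in>Trees_inf X dg. \<forall>i\<le>tdeg w.
                  \<Psi> (basis_tree (graft t i w)) = op i (\<Psi> (basis_tree t)) (\<Psi> (basis_tree w))) \<and>
               (\<forall>x\<in>X. \<Psi> (basis_tree (corolla dg x)) = \<phi> x))
              \<longrightarrow> (\<forall>f\<in>KT_inf X dg. \<Psi> f = \<Phi> f))))
     \<and>
     (\<forall>x0. X = {x0} \<and> dg x0 = 1 \<longrightarrow> (\<forall>t\<in>Trees_inf X dg. binary_tree t))"
proof -
  have free: "\<exists>\<Phi>. grafting_extension X dg sc A op \<phi> \<Phi> \<and>
      (\<forall>\<Psi>. grafting_extension X dg sc A op \<phi> \<Psi> \<longrightarrow> (\<forall>f\<in>KT_inf X dg. \<Psi> f = \<Phi> f))"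
    if "grafting_algebra sc A op" and "\<forall>x\<in>X. \<phi> x \<in> A (dg x)"
    for sc :: "'k \<Rightarrow> 'a \<Rightarrow> 'a" and A op and \<phi> :: "'x \<Rightarrow> 'a"
  proof -
    interpret grafting_space_with_generators sc A op X dg \<phi>
      using that by unfold_locales auto
    show ?thesis
      using pos by (rule free_grafting_extension)
  qed
  have binary: "\<forall>t\<in>Trees_inf X dg. binary_tree t" if "X = {x0} \<and> dg x0 = 1" for x0
    using that by (auto simp: Trees_inf_def Trees_def intro: wf_tree_binary)
  show ?thesis
    using grafting_algebra_KT free binary unfolding grafting_extension_def by blast
qed

end
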